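(* Let $H_P$ be a Hermitian operator on a finite-dimensional Hilbert space with orthonormal eigenbasis $\{|\phi_m\rangle\}_{m=0}^{D-1}$, $H_P|\phi_m\rangle = E_m|\phi_m\rangle$, with $E_0 < E_1 \le E_m$ for all $m\ge1$. Let $\tilde E_0,\tilde E_1\in\mathbb{R}$ and $\delta M_0,\delta M_1>0$ satisfy $|\tilde E_0 - E_0| < \delta M_0$ and $|\tilde E_1 - E_1| < \delta M_1$. Let $|\psi\rangle$ be a normalized state and write $|\psi\rangle = \sqrt{1-\epsilon^2}\,|\phi_0\rangle + \sum_{m\neq0}\epsilon_m|\phi_m\rangle$ with real $\epsilon_m$, $\epsilon^2=\sum_{m\ne0}\epsilon_m^2$. If $$\langle\psi|H_P|\psi\rangle < \tfrac12(\tilde E_0+\tilde E_1) - \tfrac12(\delta M_0+\delta M_1),$$ then $\epsilon^2 \le \tfrac12$, and consequently $\bigl(\langle\psi|H_P|\psi\rangle - E_0\bigr)^2 \le \Delta E^2$, where $\Delta E^2 = \langle\psi|H_P^2|\psi\rangle - \langle\psi|H_P|\psi\rangle^2$.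
   Context: $\tilde E_0,\tilde E_1$ are approximate (pre-estimated) values of the ground and first excited energies $E_0,E_1$, with error bounds $\delta M_0,\delta M_1$. *)

theory Defs
  imports "HOL-Analysis.Analysis"
begin

definition cinner :: "complex ^ 'n \<Rightarrow> complex ^ 'n \<Rightarrow> complex" where
  "cinner x y = (\<Sum>i\<in>UNIV. cnj (x $ i) * y $ i)"

definition hermitian :: "complex ^ 'n ^ 'n \<Rightarrow> bool" where
  "hermitian H \<longleftrightarrow> (\<forall>i j. H $ i $ j = cnj (H $ j $ i))"

definition expval :: "complex ^ 'n ^ 'n \<Rightarrow> complex ^ 'n \<Rightarrow> real" where
  "expval A psi = Re (cinner psi (A *v psi))"

end

theory Submission imports Defs begin

text \<open>Expanding \<open>\<psi>\<close> in the eigenbasis turns \<open>\<langle>H\<rangle>\<close> and \<open>\<langle>H\<^sup>2\<rangle>\<close> into the mean and second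
  moment of the energies \<open>E\<^sub>m\<close> under the probability weights \<open>w\<^sub>m = \<epsilon>\<^sub>m\<^sup>2\<close> (with
  \<open>w\<^sub>0 = 1 - \<epsilon>\<^sup>2\<close>), so the statement is one about a discrete distribution with mean \<open>\<mu>\<close>.
  The mean is at least \<open>(1 - \<epsilon>\<^sup>2) E\<^sub>0 + \<epsilon>\<^sup>2 E\<^sub>1\<close> and, by the hypothesis, below
  \<open>(E\<^sub>0 + E\<^sub>1)/2\<close>; hence \<open>\<epsilon>\<^sup>2 < 1/2\<close>. Moreover \<open>E\<^sub>0 \<le> \<mu>\<close> and every excited
  level lies at least as far above \<open>\<mu>\<close> as \<open>E\<^sub>0\<close> lies below it, so each term of the
  variance \<open>\<Sum> w\<^sub>m (E\<^sub>m - \<mu>)\<^sup>2\<close> is at least \<open>w\<^sub>m (\<mu> - E\<^sub>0)\<^sup>2\<close>.\<close>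

lemma cinner_sum_left: "cinner (sum f S) y = (\<Sum>k\<in>S. cinner (f k) y)"
  unfolding cinner_def by (simp add: sum_distrib_right sum_component) (rule sum.swap)

lemma cinner_sum_right: "cinner x (sum f S) = (\<Sum>k\<in>S. cinner x (f k))"
  unfolding cinner_def by (simp add: sum_distrib_left sum_component) (rule sum.swap)

lemma cinner_scale_left: "cinner (c *s x) y = cnj c * cinner x y"
  unfolding cinner_def by (simp add: sum_distrib_left algebra_simps)

lemma cinner_scale_right: "cinner x (c *s y) = c * cinner x y"
  unfolding cinner_def by (simp add: sum_distrib_left algebra_simps)

lemma cinner_eigen_expansion:
  fixes A :: "complex ^ 'n ^ 'n" and phi :: "nat \<Rightarrow> complex ^ 'n"
  assumes orth: "\<forall>m<D. \<forall>k<D. cinner (phi m) (phi k) = (if m = k then 1 else 0)"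
    and eig: "\<forall>m<D. A *v phi m = l m *s phi m"
  shows "cinner (\<Sum>m<D. a m *s phi m) (A *v (\<Sum>m<D. a m *s phi m))
           = (\<Sum>m<D. cnj (a m) * a m * l m)"
proof -
  have "cinner (\<Sum>m<D. a m *s phi m) (A *v (\<Sum>m<D. a m *s phi m))
      = (\<Sum>m<D. \<Sum>k<D. cnj (a m) * (a k * l k) * cinner (phi m) (phi k))"
    by (simp add: vec.sum vector_scalar_commute eig cinner_sum_left cinner_sum_right
        cinner_scale_left cinner_scale_right sum_distrib_left mult.assoc)
      (subst sum.swap, simp add: algebra_simps)
  also have "\<dots> = (\<Sum>m<D. \<Sum>k<D. if k = m then cnj (a m) * a m * l m else 0)"
    using orth by (intro sum.cong refl) (auto simp: mult.assoc)
  finally show ?thesis by simp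
qed

lemma cinner_real_eigen_expansion:
  fixes A :: "complex ^ 'n ^ 'n" and phi :: "nat \<Rightarrow> complex ^ 'n"
  assumes "\<forall>m<D. \<forall>k<D. cinner (phi m) (phi k) = (if m = k then 1 else 0)"
    and "\<forall>m<D. A *v phi m = complex_of_real (l m) *s phi m"
  shows "cinner (\<Sum>m<D. complex_of_real (r m) *s phi m) (A *v (\<Sum>m<D. complex_of_real (r m) *s phi m))
           = complex_of_real (\<Sum>m<D. (r m)\<^sup>2 * l m)"
  by (simp add: cinner_eigen_expansion[OF assms] power2_eq_square)

lemma eigenvector_matrix_square:
  fixes A :: "'a::field ^ 'n ^ 'n"
  assumes "A *v x = c *s x"
  shows "(A ** A) *v x = c\<^sup>2 *s x"
  using assms by (simp add: matrix_vector_mul_assoc[symmetric] vector_scalar_commute power2_eq_square)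

lemma moments_eigen_expansion:
  fixes H :: "complex ^ 'n ^ 'n" and phi :: "nat \<Rightarrow> complex ^ 'n"
  assumes orth: "\<forall>m<D. \<forall>k<D. cinner (phi m) (phi k) = (if m = k then 1 else 0)"
    and eig: "\<forall>m<D. H *v phi m = complex_of_real (E m) *s phi m"
    and psi: "psi = (\<Sum>m<D. complex_of_real (r m) *s phi m)"
  shows "cinner psi psi = complex_of_real (\<Sum>m<D. (r m)\<^sup>2)"
    and "expval H psi = (\<Sum>m<D. (r m)\<^sup>2 * E m)"
    and "expval (H ** H) psi = (\<Sum>m<D. (r m)\<^sup>2 * (E m)\<^sup>2)"
proof -
  show "cinner psi psi = complex_of_real (\<Sum>m<D. (r m)\<^sup>2)"
    using cinner_real_eigen_expansion[OF orth, of "mat 1" "\<lambda>_. 1" r]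
    by (simp add: psi matrix_vector_mul_lid)
  show "expval H psi = (\<Sum>m<D. (r m)\<^sup>2 * E m)"
    unfolding expval_def psi by (simp add: cinner_real_eigen_expansion[OF orth eig])
  have eig_square: "\<forall>m<D. (H ** H) *v phi m = complex_of_real ((E m)\<^sup>2) *s phi m"
    using eig by (simp add: eigenvector_matrix_square)
  show "expval (H ** H) psi = (\<Sum>m<D. (r m)\<^sup>2 * (E m)\<^sup>2)"
    unfolding expval_def psi
    by (simp only: cinner_real_eigen_expansion[OF orth eig_square] Re_complex_of_real)
qed

lemma weighted_mean_ge_two_level:
  fixes w x :: "'a \<Rightarrow> real"
  assumes "finite I" "i0 \<in> I" "\<forall>i\<in>I. 0 \<le> w i" "sum w I = 1" "\<forall>i\<in>I - {i0}. b \<le> x i"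
  shows "(1 - sum w (I - {i0})) * x i0 + sum w (I - {i0}) * b \<le> (\<Sum>i\<in>I. w i * x i)"
proof -
  have w0: "w i0 = 1 - sum w (I - {i0})"
    using assms(1,2,4) by (simp add: sum.remove)
  have "sum w (I - {i0}) * b \<le> (\<Sum>i\<in>I - {i0}. w i * x i)"
    unfolding sum_distrib_right using assms(3,5) by (intro sum_mono mult_left_mono) auto
  then show ?thesis
    using assms(1,2) by (simp add: sum.remove w0)
qed

lemma weight_off_ground_lt_half:
  fixes w x :: "'a \<Rightarrow> real"
  assumes "finite I" "i0 \<in> I" "\<forall>i\<in>I. 0 \<le> w i" "sum w I = 1"
    and "x i0 < b" "\<forall>i\<in>I - {i0}. b \<le> x i"
    and "(\<Sum>i\<in>I. w i * x i) < (x i0 + b) / 2"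
  shows "sum w (I - {i0}) < 1 / 2"
proof -
  have "(1 - sum w (I - {i0})) * x i0 + sum w (I - {i0}) * b < (x i0 + b) / 2"
    using weighted_mean_ge_two_level[OF assms(1-4,6)] assms(7) by linarith
  then have "sum w (I - {i0}) * (b - x i0) < 1 / 2 * (b - x i0)"
    by (simp add: algebra_simps)
  then show ?thesis
    using assms(5) by simp
qed

lemma weighted_variance_eq:
  fixes w x :: "'a \<Rightarrow> real"
  assumes "sum w I = 1"
  defines "\<mu> \<equiv> \<Sum>i\<in>I. w i * x i"
  shows "(\<Sum>i\<in>I. w i * (x i - \<mu>)\<^sup>2) = (\<Sum>i\<in>I. w i * (x i)\<^sup>2) - \<mu>\<^sup>2"
proof -
  have "(\<Sum>i\<in>I. w i * (x i - \<mu>)\<^sup>2)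
      = (\<Sum>i\<in>I. w i * (x i)\<^sup>2) - 2 * \<mu> * (\<Sum>i\<in>I. w i * x i) + \<mu>\<^sup>2 * sum w I"
    by (simp add: power2_diff algebra_simps sum.distrib sum_subtractf sum_distrib_left
        sum_distrib_right)
  then show ?thesis
    using assms(1) unfolding \<mu>_def by (simp add: power2_eq_square)
qed

lemma sq_mean_shift_le_weighted_variance:
  fixes w x :: "'a \<Rightarrow> real"
  assumes "finite I" "i0 \<in> I" "\<forall>i\<in>I. 0 \<le> w i" "sum w I = 1"
    and "x i0 < b" "\<forall>i\<in>I - {i0}. b \<le> x i"
  defines "\<mu> \<equiv> \<Sum>i\<in>I. w i * x i"
  assumes "\<mu> < (x i0 + b) / 2"
  shows "(\<mu> - x i0)\<^sup>2 \<le> (\<Sum>i\<in>I. w i * (x i - \<mu>)\<^sup>2)"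
proof -
  have "x i0 \<le> \<mu>"
  proof -
    have "(\<Sum>i\<in>I. w i * x i0) \<le> \<mu>"
      unfolding \<mu>_def using assms(3,5,6) by (intro sum_mono mult_left_mono) force+
    then show ?thesis
      using assms(4) by (simp add: sum_distrib_right[symmetric])
  qed
  have "(\<mu> - x i0)\<^sup>2 \<le> (x i - \<mu>)\<^sup>2" if "i \<in> I" for i
  proof (cases "i = i0")
    case False
    then have "b \<le> x i"
      using that assms(6) by blast
    then have "\<mu> - x i0 \<le> x i - \<mu>"
      using assms(8) by (simp add: field_simps)
    then show ?thesis
      using \<open>x i0 \<le> \<mu>\<close> by (intro power_mono) auto
  qed (simp add: power2_commute)
  then have "(\<Sum>i\<in>I. w i * (\<mu> - x i0)\<^sup>2) \<le> (\<Sum>i\<in>I. w i * (x i - \<mu>)\<^sup>2)"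
    using assms(3) by (intro sum_mono mult_left_mono) auto
  then show ?thesis
    using assms(4) by (simp add: sum_distrib_right[symmetric])
qed

theorem mainTheorem3:
  fixes H :: "complex ^ 'n ^ 'n"
    and phi :: "nat \<Rightarrow> complex ^ 'n"
    and E :: "nat \<Rightarrow> real"
    and Et0 Et1 dM0 dM1 :: real
    and psi :: "complex ^ 'n"
    and eps :: "nat \<Rightarrow> real"
    and D :: nat
  assumes D_def: "D = CARD('n)"
    and D_ge: "D \<ge> 2"
    and herm: "hermitian H"
    and orth: "\<forall>m<D. \<forall>k<D. cinner (phi m) (phi k) = (if m = k then 1 else 0)"
    and eig: "\<forall>m<D. H *v phi m = complex_of_real (E m) *s phi m"
    and gap: "E 0 < E 1"
    and order: "\<forall>m. 1 \<le> m \<and> m < D \<longrightarrow> E 1 \<le> E m"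
    and dM0_pos: "dM0 > 0" and dM1_pos: "dM1 > 0"
    and est0: "\<bar>Et0 - E 0\<bar> < dM0"
    and est1: "\<bar>Et1 - E 1\<bar> < dM1"
    and norm: "cinner psi psi = 1"
    and decomp: "psi = complex_of_real (sqrt (1 - (\<Sum>m\<in>{1..<D}. (eps m)\<^sup>2))) *s phi 0
                      + (\<Sum>m\<in>{1..<D}. complex_of_real (eps m) *s phi m)"
    and hyp: "expval H psi < (Et0 + Et1) / 2 - (dM0 + dM1) / 2"
  shows "(\<Sum>m\<in>{1..<D}. (eps m)\<^sup>2) \<le> 1 / 2
         \<and> (expval H psi - E 0)\<^sup>2 \<le> expval (H ** H) psi - (expval H psi)\<^sup>2"
proof -
  define r where "r m = (if m = 0 then sqrt (1 - (\<Sum>m\<in>{1..<D}. (eps m)\<^sup>2)) else eps m)" for m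
  define w where "w m = (r m)\<^sup>2" for m
  have excited: "{..<D} - {0} = {1..<D}" and ground: "0 \<in> {..<D}"
    using D_ge by auto
  have "psi = (\<Sum>m<D. complex_of_real (r m) *s phi m)"
    using decomp by (simp add: sum.remove[OF _ ground] excited r_def)
  note moments = moments_eigen_expansion[OF orth eig this, folded w_def]
  \<comment> \<open>The ground weight \<open>w 0\<close> is never evaluated through the square root, so no bound on
    \<open>\<epsilon>\<^sup>2\<close> is needed a priori.\<close>
  have w_sum: "sum w {..<D} = 1"
    using moments(1) norm by (metis of_real_eq_1_iff)
  have w_nonneg: "\<forall>m\<in>{..<D}. 0 \<le> w m"
    by (simp add: w_def)
  have levels: "\<forall>m\<in>{..<D} - {0}. E 1 \<le> E m"
    using order by auto
  have below_midpoint: "(\<Sum>m<D. w m * E m) < (E 0 + E 1) / 2"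
    using hyp est0 est1 moments(2) by (simp add: abs_less_iff field_simps)
  note setting = finite_lessThan ground w_nonneg w_sum gap levels below_midpoint
  have "sum w ({..<D} - {0}) < 1 / 2"
    by (rule weight_off_ground_lt_half[OF setting])
  moreover have "(expval H psi - E 0)\<^sup>2 \<le> expval (H ** H) psi - (expval H psi)\<^sup>2"
    using sq_mean_shift_le_weighted_variance[OF setting] weighted_variance_eq[OF w_sum, of E]
    by (simp add: moments(2,3))
  ultimately show ?thesis
    unfolding excited by (simp add: w_def r_def)
qed

end
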